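(* Let $\lambda=(\lambda_1,\ldots,\lambda_\ell)$ and $\mu$ be partitions. Then \[ h_\lambda[\Xi_\mu] \;=\; \sum_{\pi \,\vdash\!\!\vdash\, \{\!\!\{ 1^{\lambda_1},2^{\lambda_2},\ldots,\ell^{\lambda_\ell}\}\!\!\}} H_{\tilde m(\pi),\mu}, \] where the sum runs over all multiset partitions $\pi$ of the multiset $\{\!\!\{ 1^{\lambda_1},\ldots,\ell^{\lambda_\ell}\}\!\!\}$ and, for partitions $\nu,\mu$, $H_{\nu,\mu}:=\langle h_{|\mu|-|\nu|}h_\nu,\,p_\mu\rangle$.
   Context: $Sym=\mathbb{Q}[p_1,p_2,\ldots]$ is the ring of symmetric functions with power sums $p_k$, complete homogeneous functions $h_\lambda$, and the Hall inner product $\langle\cdot,\cdot\rangle$ with $\langle p_\lambda,p_\mu\rangle=z_\lambda\delta_{\lambda\mu}$; the convention $h_0=1$, $h_{-r}=0$ for $r>0$ is used (so $H_{\nu,\mu}=0$ when $|\nu|>|\mu|$). For $k>0$, $\Xi_k$ denotes the list $1,e^{2\pi i/k},\ldots,e^{2\pi i(k-1)/k}$ of eigenvalues of a $k$-cycle permutation matrix, and for a partition $\mu$, $\Xi_\mu$ is the concatenation of $\Xi_{\mu_1},\ldots,\Xi_{\mu_{\ell(\mu)}}$. For $f\in Sym$, $f[\Xi_\mu]$ is obtained by substituting for each $p_k$ the sum of the $k$-th powers of the entries of $\Xi_\mu$ (equivalently $p_k\mapsto\sum_{d\mid k} d\, m_d(\mu)$, where $m_d(\mu)$ is the number of parts of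 $\mu$ equal to $d$). A multiset partition of a multiset $S$ is a multiset of nonempty multisets whose multiset union is $S$. For a multiset partition $\pi$, $\tilde m(\pi)$ is the partition (of the number of parts of $\pi$) whose parts are the multiplicities with which the distinct multisets occur in $\pi$. *)

theory Defs
  imports Complex_Main "HOL-Library.Multiset" "HOL-Library.Poly_Mapping"
begin

text \<open>Partitions are represented as finite multisets of positive naturals.
  The ring Sym = Q[p_1,p_2,...] is modelled as the monoid ring of the monoid
  (nat multiset, +) over rat: the basis element indexed by a partition rho is
  the power sum product p_rho, and p_rho * p_sigma = p_(rho + sigma).\<close>

type_synonym sym = "nat multiset \<Rightarrow>\<^sub>0 rat"

definition is_partition :: "nat multiset \<Rightarrow> bool" where
  "is_partition \<rho> \<longleftrightarrow> (\<forall>x\<in>#\<rho>. 0 < x)"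

definition partitions_of :: "nat \<Rightarrow> nat multiset set" where
  "partitions_of n = {\<rho>. is_partition \<rho> \<and> sum_mset \<rho> = n}"

definition psym :: "nat multiset \<Rightarrow> sym" where
  "psym \<rho> = Poly_Mapping.single \<rho> 1"

definition zee :: "nat multiset \<Rightarrow> nat" where
  "zee \<rho> = (\<Prod>i\<in>set_mset \<rho>. i ^ count \<rho> i * fact (count \<rho> i))"

definition hsym :: "int \<Rightarrow> sym" where
  "hsym n = (if n < 0 then 0 else
     (\<Sum>\<rho>\<in>partitions_of (nat n). Poly_Mapping.single \<rho> (1 / of_nat (zee \<rho>))))"

definition hpart :: "nat multiset \<Rightarrow> sym" where
  "hpart \<nu> = (\<Prod>k\<in>#\<nu>. hsym (int k))"

definition hall :: "sym \<Rightarrow> sym \<Rightarrow> rat" where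
  "hall f g = (\<Sum>\<rho>\<in>Poly_Mapping.keys f \<inter> Poly_Mapping.keys g. of_nat (zee \<rho>) * Poly_Mapping.lookup f \<rho> * Poly_Mapping.lookup g \<rho>)"

definition pXi :: "nat multiset \<Rightarrow> nat \<Rightarrow> rat" where
  "pXi \<mu> k = of_nat (\<Sum>d\<in>set_mset \<mu>. if d dvd k then d * count \<mu> d else 0)"

text \<open>f[Xi_mu]: the ring homomorphism substituting p_k := p_k[Xi_mu]\<close>
definition evalXi :: "sym \<Rightarrow> nat multiset \<Rightarrow> rat" where
  "evalXi f \<mu> = (\<Sum>\<rho>\<in>Poly_Mapping.keys f. Poly_Mapping.lookup f \<rho> * (\<Prod>k\<in>#\<rho>. pXi \<mu> k))"

definition Hcoef :: "nat multiset \<Rightarrow> nat multiset \<Rightarrow> rat" where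
  "Hcoef \<nu> \<mu> = hall (hsym (int (sum_mset \<mu>) - int (sum_mset \<nu>)) * hpart \<nu>) (psym \<mu>)"

definition multiset_partitions :: "'a multiset \<Rightarrow> 'a multiset multiset set" where
  "multiset_partitions S = {\<pi>. (\<forall>B\<in>#\<pi>. B \<noteq> {#}) \<and> sum_mset \<pi> = S}"

definition mtilde :: "'a multiset multiset \<Rightarrow> nat multiset" where
  "mtilde \<pi> = image_mset (count \<pi>) (mset_set (set_mset \<pi>))"

definition content_mset :: "nat list \<Rightarrow> nat multiset" where
  "content_mset lam = (\<Sum>i<length lam. replicate_mset (lam ! i) (Suc i))"

end

theory Submission
  imports Defs "HOL-Library.FuncSet" "HOL-Computational_Algebra.Formal_Power_Series"
begin

text \<open>Both sides depend on \<open>\<lambda>\<close> only through the multiset \<open>S = {1^\<lambda>\<^sub>1, ..., l^\<lambda>\<^sub>l}\<close>,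
  and as functions \<open>F(S, \<mu>)\<close> they agree at \<open>\<mu> = {}\<close> (both are \<open>[S = {}]\<close>) and satisfy
  the same recursion
    \<open>F(S, \<mu> + {d}) = \<Sum>\<^sub>B F(S - d B, \<mu>)\<close>, summed over all multisets \<open>B\<close> with \<open>d B \<subseteq> S\<close>.

  Left side: \<open>h\<^sub>\<lambda>[\<Xi>\<^sub>\<mu>]\<close> is the product of the \<open>h\<^sub>n[\<Xi>\<^sub>\<mu>]\<close> with \<open>n = m\<^sub>x(S)\<close>. Newton's
  identity \<open>n h\<^sub>n = \<Sum>\<^sub>k p\<^sub>k h\<^sub>n\<^sub>-\<^sub>k\<close> is a first order differential equation for
  \<open>\<Sum>\<^sub>n h\<^sub>n[\<Xi>\<^sub>\<mu>] t\<^sup>n\<close>, whose solution is \<open>\<Prod>\<^sub>d 1/(1 - t\<^sup>d)\<close> over the parts \<open>d\<close> of \<open>\<mu>\<close>.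
  So a new part \<open>d\<close> lets every multiplicity \<open>m\<^sub>x(S)\<close> drop by a multiple \<open>d m\<^sub>x(B)\<close>.

  Right side: the adjoint of multiplication by \<open>p\<^sub>d\<close> for the Hall inner product is the
  derivation \<open>d \<partial>/\<partial>p\<^sub>d\<close>, which sends \<open>h\<^sub>n\<close> to \<open>h\<^sub>n\<^sub>-\<^sub>d\<close>. On \<open>h\<^bsub>|\<mu>|-|\<pi>|\<^esub> \<Prod>\<^sub>B h\<^bsub>m\<^sub>B(\<pi>)\<^esub>\<close>
  it either lowers the first factor (the term \<open>B = {}\<close>) or removes \<open>d\<close> copies of one
  block \<open>B\<close> from \<open>\<pi>\<close>, leaving a multiset partition of \<open>S - d B\<close>.\<close>

abbreviation lookup :: "('a \<Rightarrow>\<^sub>0 'b::zero) \<Rightarrow> 'a \<Rightarrow> 'b" where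
  "lookup \<equiv> Poly_Mapping.lookup"

abbreviation keys :: "('a \<Rightarrow>\<^sub>0 'b::zero) \<Rightarrow> 'a set" where
  "keys \<equiv> Poly_Mapping.keys"

abbreviation single :: "'a \<Rightarrow> 'b \<Rightarrow> ('a \<Rightarrow>\<^sub>0 'b::zero)" where
  "single \<equiv> Poly_Mapping.single"

lemma finite_multisets_size_le:
  assumes "finite A"
  shows "finite {X. set_mset X \<subseteq> A \<and> size X \<le> n}"
proof -
  have "{X. set_mset X \<subseteq> A \<and> size X \<le> n} = (\<Union>m\<in>{..n}. multisets_of_size A m)"
    by (auto simp: multisets_of_size_def)
  thus ?thesis using assms by auto
qed

lemma finite_subset_mset: "finite {B. B \<subseteq># S}"
proof -
  have "{B. B \<subseteq># S} \<subseteq> {X. set_mset X \<subseteq> set_mset S \<and> size X \<le> size S}"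
    by (auto dest: set_mset_mono size_mset_mono)
  thus ?thesis by (rule finite_subset) (rule finite_multisets_size_le, simp)
qed

lemma size_le_sum_mset: "\<forall>x\<in>#\<rho>. (0::nat) < x \<Longrightarrow> size \<rho> \<le> sum_mset \<rho>"
  by (induction \<rho>) auto

lemma member_le_sum_mset: "x \<in># (\<rho>::nat multiset) \<Longrightarrow> x \<le> sum_mset \<rho>"
  by (induction \<rho>) auto

lemma finite_partitions_of: "finite (partitions_of n)"
proof -
  have "partitions_of n \<subseteq> {X. set_mset X \<subseteq> {1..n} \<and> size X \<le> n}"
  proof
    fix \<rho> assume "\<rho> \<in> partitions_of n"
    hence pos: "\<forall>x\<in>#\<rho>. 0 < x" and sum: "sum_mset \<rho> = n"
      by (auto simp: partitions_of_def is_partition_def)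
    have "\<forall>x\<in>#\<rho>. x \<le> n" using sum member_le_sum_mset by blast
    moreover have "size \<rho> \<le> n" using size_le_sum_mset[OF pos] sum by simp
    ultimately show "\<rho> \<in> {X. set_mset X \<subseteq> {1..n} \<and> size X \<le> n}" using pos by force
  qed
  thus ?thesis by (rule finite_subset) (rule finite_multisets_size_le, simp)
qed

lemma member_subset_sum_mset: "B \<in># \<pi> \<Longrightarrow> B \<subseteq># sum_mset (\<pi> :: 'a multiset multiset)"
  by (induction \<pi>) (auto simp: subset_mset.add_increasing)

lemma size_le_size_sum_mset:
  "\<forall>B\<in>#\<pi>. B \<noteq> {#} \<Longrightarrow> size \<pi> \<le> size (sum_mset (\<pi> :: 'a multiset multiset))"
proof (induction \<pi>)
  case (add C \<pi>)
  hence "size C \<ge> 1" by (simp add: Suc_le_eq nonempty_has_size)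
  thus ?case using add by simp
qed simp

lemma finite_multiset_partitions: "finite (multiset_partitions S)"
proof -
  have "multiset_partitions S \<subseteq> {X. set_mset X \<subseteq> {B. B \<subseteq># S} \<and> size X \<le> size S}"
    by (auto simp: multiset_partitions_def intro: member_subset_sum_mset size_le_size_sum_mset)
  thus ?thesis by (rule finite_subset) (rule finite_multisets_size_le, rule finite_subset_mset)
qed

lemma lookup_hsym:
  "lookup (hsym n) \<rho> =
     (if 0 \<le> n \<and> is_partition \<rho> \<and> sum_mset \<rho> = nat n then 1 / of_nat (zee \<rho>) else 0)"
proof -
  have "finite {\<rho>. is_partition \<rho> \<and> sum_mset \<rho> = m}" for m
    using finite_partitions_of[of m] by (simp add: partitions_of_def)
  thus ?thesis unfolding hsym_def
    by (auto simp: lookup_sum lookup_single partitions_of_def when_def sum.delta)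
qed

lemma hsym_neg: "n < 0 \<Longrightarrow> hsym n = 0"
  by (simp add: hsym_def)

lemma hsym_0: "hsym 0 = 1"
proof (rule poly_mapping_eqI)
  fix \<rho>
  have "is_partition \<rho> \<and> sum_mset \<rho> = 0 \<longleftrightarrow> \<rho> = {#}"
    by (cases \<rho>) (auto simp: is_partition_def)
  thus "lookup (hsym 0) \<rho> = lookup 1 \<rho>"
    by (auto simp: lookup_hsym lookup_one when_def zee_def)
qed

lemma zee_add_mset: "zee (add_mset d \<mu>) = zee \<mu> * d * (count \<mu> d + 1)"
proof -
  let ?f = "\<lambda>\<mu> i. i ^ count \<mu> i * fact (count \<mu> i) :: nat"
  have rest: "(\<Prod>i\<in>set_mset \<mu> - {d}. ?f (add_mset d \<mu>) i) = (\<Prod>i\<in>set_mset \<mu> - {d}. ?f \<mu> i)"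
    by (rule prod.cong) auto
  have "zee (add_mset d \<mu>) = ?f (add_mset d \<mu>) d * (\<Prod>i\<in>set_mset \<mu> - {d}. ?f (add_mset d \<mu>) i)"
    unfolding zee_def by (simp add: prod.insert_remove)
  moreover have "zee \<mu> = ?f \<mu> d * (\<Prod>i\<in>set_mset \<mu> - {d}. ?f \<mu> i)"
    unfolding zee_def by (cases "d \<in># \<mu>") (simp_all add: prod.remove not_in_iff)
  moreover have "?f (add_mset d \<mu>) d = ?f \<mu> d * (d * (count \<mu> d + 1))"
    by (simp add: fact_Suc algebra_simps)
  ultimately show ?thesis by (simp add: rest algebra_simps)
qed

lemma zee_pos: "is_partition \<mu> \<Longrightarrow> 0 < zee \<mu>"
  unfolding zee_def is_partition_def by (auto intro!: prod_pos)

lemma hall_psym: "hall f (psym \<mu>) = of_nat (zee \<mu>) * lookup f \<mu>"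
  unfolding hall_def psym_def by (cases "\<mu> \<in> keys f") (auto simp: in_keys_iff)

lemma hall_add_left: "hall (f + g) (psym \<mu>) = hall f (psym \<mu>) + hall g (psym \<mu>)"
  by (simp add: hall_psym lookup_add algebra_simps)

lemma hall_sum_left: "hall (\<Sum>i\<in>A. f i) (psym \<mu>) = (\<Sum>i\<in>A. hall (f i) (psym \<mu>))"
  by (simp add: hall_psym lookup_sum sum_distrib_left)

lemma poly_mapping_sum_single: "f = (\<Sum>k\<in>keys f. single k (lookup f k))"
  by (rule poly_mapping_eqI) (auto simp: lookup_sum lookup_single when_def sum.delta in_keys_iff)

section \<open>The derivation \<open>d \<partial>/\<partial>p\<^sub>d\<close>\<close>

text \<open>\<open>pdiff d = d \<partial>/\<partial>p\<^sub>d\<close> is the adjoint of multiplication by \<open>p\<^sub>d\<close> for the Hall inner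
  product, because \<open>z\<^bsub>\<sigma> + {d}\<^esub> = d (m\<^sub>d(\<sigma>) + 1) z\<^sub>\<sigma>\<close>.\<close>

definition pdiff :: "nat \<Rightarrow> sym \<Rightarrow> sym" where
  "pdiff d f = Abs_poly_mapping (\<lambda>\<sigma>. of_nat (d * (count \<sigma> d + 1)) * lookup f (add_mset d \<sigma>))"

lemma lookup_pdiff: "lookup (pdiff d f) \<sigma> = of_nat (d * (count \<sigma> d + 1)) * lookup f (add_mset d \<sigma>)"
proof -
  let ?g = "\<lambda>\<sigma>. of_nat (d * (count \<sigma> d + 1)) * lookup f (add_mset d \<sigma>) :: rat"
  have "{\<sigma>. ?g \<sigma> \<noteq> 0} \<subseteq> (\<lambda>\<rho>. \<rho> - {#d#}) ` keys f"
    by (auto simp: in_keys_iff intro!: rev_image_eqI[where x = "add_mset d _"])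
  hence "finite {\<sigma>. ?g \<sigma> \<noteq> 0}" by (rule finite_subset) simp
  thus ?thesis unfolding pdiff_def by simp
qed

lemma pdiff_add: "pdiff d (f + g) = pdiff d f + pdiff d g"
  by (rule poly_mapping_eqI) (simp add: lookup_pdiff lookup_add algebra_simps)

lemma pdiff_sum: "pdiff d (\<Sum>i\<in>A. f i) = (\<Sum>i\<in>A. pdiff d (f i))"
proof -
  have "pdiff d 0 = 0" by (rule poly_mapping_eqI) (simp add: lookup_pdiff)
  thus ?thesis by (induction A rule: infinite_finite_induct) (auto simp: pdiff_add)
qed

lemma pdiff_single: "pdiff d (single \<rho> a) = single (\<rho> - {#d#}) (a * of_nat (d * count \<rho> d))"
proof (rule poly_mapping_eqI)
  fix \<sigma>
  show "lookup (pdiff d (single \<rho> a)) \<sigma> = lookup (single (\<rho> - {#d#}) (a * of_nat (d * count \<rho> d))) \<sigma>"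
  proof (cases "d \<in># \<rho>")
    case True
    then obtain \<tau> where "\<rho> = add_mset d \<tau>" by (metis insert_DiffM)
    thus ?thesis by (auto simp: lookup_pdiff lookup_single when_def)
  next
    case False
    hence "\<rho> \<noteq> add_mset d \<sigma>" by auto
    thus ?thesis using False by (simp add: lookup_pdiff lookup_single when_def not_in_iff)
  qed
qed

lemma pdiff_mult_single:
  "pdiff d (single a x * single b y) = pdiff d (single a x) * single b y + single a x * pdiff d (single b y)"
proof -
  have 1: "pdiff d (single a x) * single b y = single (a + b - {#d#}) (x * y * of_nat (d * count a d))"
    by (cases "d \<in># a") (auto simp: pdiff_single mult_single not_in_iff ac_simps)
  have 2: "single a x * pdiff d (single b y) = single (a + b - {#d#}) (x * y * of_nat (d * count b d))"
    by (cases "d \<in># b") (auto simp: pdiff_single mult_single not_in_iff ac_simps)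
  show ?thesis unfolding 1 2
    by (simp add: mult_single pdiff_single single_add[symmetric] algebra_simps)
qed

lemma pdiff_mult: "pdiff d (f * g) = pdiff d f * g + f * pdiff d g"
proof -
  let ?F = "\<lambda>k. single k (lookup f k)" and ?G = "\<lambda>l. single l (lookup g l)"
  have "pdiff d (f * g) = pdiff d ((\<Sum>k\<in>keys f. ?F k) * (\<Sum>l\<in>keys g. ?G l))"
    by (simp flip: poly_mapping_sum_single)
  also have "\<dots> = (\<Sum>k\<in>keys f. \<Sum>l\<in>keys g. pdiff d (?F k) * ?G l + ?F k * pdiff d (?G l))"
    by (simp add: sum_product pdiff_sum pdiff_mult_single)
  also have "\<dots> = pdiff d (\<Sum>k\<in>keys f. ?F k) * (\<Sum>l\<in>keys g. ?G l)
                  + (\<Sum>k\<in>keys f. ?F k) * pdiff d (\<Sum>l\<in>keys g. ?G l)"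
    by (simp add: sum_product sum.distrib pdiff_sum)
  finally show ?thesis by (simp flip: poly_mapping_sum_single)
qed

lemma pdiff_prod:
  assumes "finite A"
  shows "pdiff d (\<Prod>i\<in>A. f i) = (\<Sum>i\<in>A. pdiff d (f i) * (\<Prod>j\<in>A - {i}. f j))"
  using assms
proof (induction A rule: finite_induct)
  case empty
  have "pdiff d 1 = 0" by (rule poly_mapping_eqI) (simp add: lookup_pdiff lookup_one when_def)
  thus ?case by simp
next
  case (insert x A)
  have "(\<Sum>i\<in>A. pdiff d (f i) * (\<Prod>j\<in>insert x A - {i}. f j))
      = f x * (\<Sum>i\<in>A. pdiff d (f i) * (\<Prod>j\<in>A - {i}. f j))"
    unfolding sum_distrib_left
  proof (rule sum.cong)
    fix i assume "i \<in> A"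
    hence "insert x A - {i} = insert x (A - {i})" using insert by auto
    thus "pdiff d (f i) * (\<Prod>j\<in>insert x A - {i}. f j) = f x * (pdiff d (f i) * (\<Prod>j\<in>A - {i}. f j))"
      using insert by (simp add: algebra_simps)
  qed simp
  thus ?case using insert by (simp add: pdiff_mult algebra_simps)
qed

lemma pdiff_hsym:
  assumes "0 < d"
  shows "pdiff d (hsym n) = hsym (n - int d)"
proof (rule poly_mapping_eqI)
  fix \<sigma>
  have cond: "(0 \<le> n \<and> is_partition (add_mset d \<sigma>) \<and> sum_mset (add_mset d \<sigma>) = nat n)
      \<longleftrightarrow> (0 \<le> n - int d \<and> is_partition \<sigma> \<and> sum_mset \<sigma> = nat (n - int d))"
    using assms by (auto simp: is_partition_def)
  show "lookup (pdiff d (hsym n)) \<sigma> = lookup (hsym (n - int d)) \<sigma>"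
  proof (cases "0 \<le> n - int d \<and> is_partition \<sigma> \<and> sum_mset \<sigma> = nat (n - int d)")
    case True
    define c where "c = d * (count \<sigma> d + 1)"
    have "zee (add_mset d \<sigma>) = c * zee \<sigma>"
      by (simp add: c_def zee_add_mset algebra_simps)
    moreover have "0 < c" using assms by (simp add: c_def)
    ultimately show ?thesis using True unfolding lookup_pdiff lookup_hsym cond c_def[symmetric]
      by simp
  qed (simp only: lookup_pdiff lookup_hsym cond if_False mult_zero_right)
qed

lemma hall_psym_add_mset: "hall f (psym (add_mset d \<mu>)) = hall (pdiff d f) (psym \<mu>)"
  by (simp add: hall_psym lookup_pdiff zee_add_mset algebra_simps)

section \<open>The recursion for the sum of \<open>H\<close>-coefficients\<close>

definition Hcoef_mpart :: "nat multiset multiset \<Rightarrow> nat multiset \<Rightarrow> rat" where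
  "Hcoef_mpart \<pi> \<mu> = hall (hsym (int (sum_mset \<mu>) - int (size \<pi>)) *
                          (\<Prod>B\<in>set_mset \<pi>. hsym (int (count \<pi> B)))) (psym \<mu>)"

definition Hcoef_mpart_sum :: "nat multiset \<Rightarrow> nat multiset \<Rightarrow> rat" where
  "Hcoef_mpart_sum S \<mu> = (\<Sum>\<pi>\<in>multiset_partitions S. Hcoef_mpart \<pi> \<mu>)"

lemma Hcoef_mtilde: "Hcoef (mtilde \<pi>) \<mu> = Hcoef_mpart \<pi> \<mu>"
proof -
  have "sum_mset (mtilde \<pi>) = size \<pi>"
    unfolding mtilde_def size_multiset_overloaded_eq by (simp add: sum_unfold_sum_mset)
  moreover have "hpart (mtilde \<pi>) = (\<Prod>B\<in>set_mset \<pi>. hsym (int (count \<pi> B)))"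
    unfolding hpart_def mtilde_def
    by (simp add: prod_unfold_prod_mset image_mset.compositionality o_def)
  ultimately show ?thesis unfolding Hcoef_def Hcoef_mpart_def by simp
qed

lemma prod_hsym_count_diff_replicate:
  assumes "B \<in># \<pi>" "d \<le> count \<pi> B"
  shows "(\<Prod>C\<in>set_mset (\<pi> - replicate_mset d B). hsym (int (count (\<pi> - replicate_mset d B) C)))
       = hsym (int (count \<pi> B - d)) * (\<Prod>C\<in>set_mset \<pi> - {B}. hsym (int (count \<pi> C)))"
proof (cases "count \<pi> B = d")
  case True
  hence "set_mset (\<pi> - replicate_mset d B) = set_mset \<pi> - {B}"
    using assms by (auto simp: in_diff_count split: if_splits)
  thus ?thesis using True by (auto simp: hsym_0 intro!: prod.cong)
next
  case False
  hence "set_mset (\<pi> - replicate_mset d B) = set_mset \<pi>"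
    using assms by (auto simp: in_diff_count split: if_splits)
  moreover have "(\<Prod>C\<in>set_mset \<pi> - {B}. hsym (int (count (\<pi> - replicate_mset d B) C)))
               = (\<Prod>C\<in>set_mset \<pi> - {B}. hsym (int (count \<pi> C)))"
    by (rule prod.cong) auto
  ultimately show ?thesis using assms by (simp add: prod.remove)
qed

lemma Hcoef_mpart_add_mset:
  assumes "0 < d"
  shows "Hcoef_mpart \<pi> (add_mset d \<mu>) = Hcoef_mpart \<pi> \<mu> +
     (\<Sum>B\<in>{B\<in>set_mset \<pi>. d \<le> count \<pi> B}. Hcoef_mpart (\<pi> - replicate_mset d B) \<mu>)"
proof -
  define N where "N = int (sum_mset \<mu>) - int (size \<pi>)"
  define P where "P = (\<Prod>B\<in>set_mset \<pi>. hsym (int (count \<pi> B)))"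
  define P' where "P' B = (\<Prod>C\<in>set_mset \<pi> - {B}. hsym (int (count \<pi> C)))" for B
  have lowered_block: "hall (hsym (N + int d) * (hsym (int (count \<pi> B) - int d) * P' B)) (psym \<mu>)
      = (if d \<le> count \<pi> B then Hcoef_mpart (\<pi> - replicate_mset d B) \<mu> else 0)"
    if B: "B \<in># \<pi>" for B
  proof (cases "d \<le> count \<pi> B")
    case True
    hence "replicate_mset d B \<subseteq># \<pi>" by (simp flip: count_le_replicate_mset_subset_eq)
    hence "int (size (\<pi> - replicate_mset d B)) = int (size \<pi>) - int d"
      using size_mset_mono by (fastforce simp: size_Diff_submset)
    hence "N + int d = int (sum_mset \<mu>) - int (size (\<pi> - replicate_mset d B))"
      by (simp add: N_def)
    moreover have "int (count \<pi> B) - int d = int (count \<pi> B - d)" using True by simp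
    ultimately show ?thesis using True
      unfolding Hcoef_mpart_def prod_hsym_count_diff_replicate[OF B True] P'_def by simp
  qed (simp add: hsym_neg hall_psym)
  have "Hcoef_mpart \<pi> (add_mset d \<mu>) = hall (pdiff d (hsym (N + int d) * P)) (psym \<mu>)"
    unfolding Hcoef_mpart_def N_def P_def by (simp add: hall_psym_add_mset algebra_simps)
  also have "pdiff d (hsym (N + int d) * P) = hsym N * P +
      (\<Sum>B\<in>set_mset \<pi>. hsym (N + int d) * (hsym (int (count \<pi> B) - int d) * P' B))"
    unfolding pdiff_mult P_def P'_def using assms
    by (simp add: pdiff_prod pdiff_hsym sum_distrib_left)
  also have "hall \<dots> (psym \<mu>) = Hcoef_mpart \<pi> \<mu> +
      (\<Sum>B\<in>set_mset \<pi>. if d \<le> count \<pi> B then Hcoef_mpart (\<pi> - replicate_mset d B) \<mu> else 0)"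
  proof -
    have "hall (hsym N * P) (psym \<mu>) = Hcoef_mpart \<pi> \<mu>"
      by (simp add: Hcoef_mpart_def N_def P_def)
    thus ?thesis unfolding hall_add_left hall_sum_left by (simp add: lowered_block cong: sum.cong)
  qed
  finally show ?thesis by (simp add: sum.inter_filter)
qed

lemma sum_mset_replicate_mset_eq_repeat_mset: "sum_mset (replicate_mset d B) = repeat_mset d B"
  by (induction d) auto

lemma bij_betw_remove_replicated_block:
  assumes "0 < d"
  shows "bij_betw (\<lambda>(\<pi>, B). (B, \<pi> - replicate_mset d B))
     (SIGMA \<pi>:multiset_partitions S. {B\<in>set_mset \<pi>. d \<le> count \<pi> B})
     (SIGMA B:{B. B \<noteq> {#} \<and> repeat_mset d B \<subseteq># S}. multiset_partitions (S - repeat_mset d B))"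
proof (rule bij_betw_byWitness[where f' = "\<lambda>(B, \<pi>'). (\<pi>' + replicate_mset d B, B)"])
  show "\<forall>a\<in>(SIGMA \<pi>:multiset_partitions S. {B\<in>set_mset \<pi>. d \<le> count \<pi> B}).
          (\<lambda>(B, \<pi>'). (\<pi>' + replicate_mset d B, B)) ((\<lambda>(\<pi>, B). (B, \<pi> - replicate_mset d B)) a) = a"
  proof clarify
    fix \<pi> B assume "\<pi> \<in> multiset_partitions S" "B \<in># \<pi>" "d \<le> count \<pi> B"
    thus "\<pi> - replicate_mset d B + replicate_mset d B = \<pi> \<and> B = B"
      by (simp add: subset_mset.diff_add flip: count_le_replicate_mset_subset_eq)
  qed
  show "\<forall>b\<in>(SIGMA B:{B. B \<noteq> {#} \<and> repeat_mset d B \<subseteq># S}. multiset_partitions (S - repeat_mset d B)).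
          (\<lambda>(\<pi>, B). (B, \<pi> - replicate_mset d B)) ((\<lambda>(B, \<pi>'). (\<pi>' + replicate_mset d B, B)) b) = b"
    by auto
  show "(\<lambda>(\<pi>, B). (B, \<pi> - replicate_mset d B)) `
          (SIGMA \<pi>:multiset_partitions S. {B\<in>set_mset \<pi>. d \<le> count \<pi> B})
        \<subseteq> (SIGMA B:{B. B \<noteq> {#} \<and> repeat_mset d B \<subseteq># S}. multiset_partitions (S - repeat_mset d B))"
  proof clarify
    fix \<pi> B assume \<pi>: "\<pi> \<in> multiset_partitions S" and B: "B \<in># \<pi>" "d \<le> count \<pi> B"
    hence "\<pi> = (\<pi> - replicate_mset d B) + replicate_mset d B"
      by (simp add: subset_mset.diff_add flip: count_le_replicate_mset_subset_eq)
    hence sum: "S = sum_mset (\<pi> - replicate_mset d B) + repeat_mset d B"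
      using \<pi> unfolding multiset_partitions_def
      by (metis (mono_tags, lifting) mem_Collect_eq sum_mset.union
            sum_mset_replicate_mset_eq_repeat_mset)
    have "B \<noteq> {#}" using \<pi> B by (auto simp: multiset_partitions_def)
    moreover have "repeat_mset d B \<subseteq># S" by (subst sum) simp
    moreover have "\<pi> - replicate_mset d B \<in> multiset_partitions (S - repeat_mset d B)"
      using \<pi> by (subst sum) (auto simp: multiset_partitions_def dest: in_diffD)
    ultimately show "B \<in> {B. B \<noteq> {#} \<and> repeat_mset d B \<subseteq># S} \<and>
          \<pi> - replicate_mset d B \<in> multiset_partitions (S - repeat_mset d B)" by blast
  qed
  show "(\<lambda>(B, \<pi>'). (\<pi>' + replicate_mset d B, B)) `
          (SIGMA B:{B. B \<noteq> {#} \<and> repeat_mset d B \<subseteq># S}. multiset_partitions (S - repeat_mset d B))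
        \<subseteq> (SIGMA \<pi>:multiset_partitions S. {B\<in>set_mset \<pi>. d \<le> count \<pi> B})"
  proof clarify
    fix B \<pi>' assume \<pi>': "\<pi>' \<in> multiset_partitions (S - repeat_mset d B)"
      and "B \<noteq> {#}" "repeat_mset d B \<subseteq># S"
    hence "\<pi>' + replicate_mset d B \<in> multiset_partitions S"
      by (auto simp: multiset_partitions_def sum_mset_replicate_mset_eq_repeat_mset
                     subset_mset.diff_add)
    moreover have "B \<in> {C. C \<in># \<pi>' + replicate_mset d B \<and> d \<le> count (\<pi>' + replicate_mset d B) C}"
      using assms by simp
    ultimately show "\<pi>' + replicate_mset d B \<in> multiset_partitions S \<and>
        B \<in> {C. C \<in># \<pi>' + replicate_mset d B \<and> d \<le> count (\<pi>' + replicate_mset d B) C}" ..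
  qed
qed

lemma Hcoef_mpart_sum_empty: "Hcoef_mpart_sum S {#} = (if S = {#} then 1 else 0)"
proof -
  have "Hcoef_mpart \<pi> {#} = (if \<pi> = {#} then 1 else 0)" for \<pi> :: "nat multiset multiset"
    by (cases "\<pi> = {#}")
       (simp_all add: Hcoef_mpart_def hall_psym hsym_0 zee_def hsym_neg nonempty_has_size)
  moreover have "{#} \<in> multiset_partitions S \<longleftrightarrow> S = {#}"
    by (auto simp: multiset_partitions_def)
  ultimately show ?thesis
    unfolding Hcoef_mpart_sum_def using finite_multiset_partitions[of S] by (simp add: sum.delta)
qed

lemma Hcoef_mpart_sum_add_mset:
  assumes "0 < d"
  shows "Hcoef_mpart_sum S (add_mset d \<mu>) =
           (\<Sum>B\<in>{B. repeat_mset d B \<subseteq># S}. Hcoef_mpart_sum (S - repeat_mset d B) \<mu>)"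
proof -
  define Bs where "Bs = {B. B \<noteq> {#} \<and> repeat_mset d B \<subseteq># S}"
  have "B \<subseteq># repeat_mset d B" for B using assms by (cases d) auto
  hence "{B. repeat_mset d B \<subseteq># S} \<subseteq> {B. B \<subseteq># S}"
    using subset_mset.order_trans by blast
  hence fin: "finite {B. repeat_mset d B \<subseteq># S}"
    using finite_subset_mset finite_subset by blast
  have "Hcoef_mpart_sum S (add_mset d \<mu>) = Hcoef_mpart_sum S \<mu> +
      (\<Sum>\<pi>\<in>multiset_partitions S. \<Sum>B\<in>{B\<in>set_mset \<pi>. d \<le> count \<pi> B}.
          Hcoef_mpart (\<pi> - replicate_mset d B) \<mu>)"
    unfolding Hcoef_mpart_sum_def by (simp add: Hcoef_mpart_add_mset[OF assms] sum.distrib)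
  also have "(\<Sum>\<pi>\<in>multiset_partitions S. \<Sum>B\<in>{B\<in>set_mset \<pi>. d \<le> count \<pi> B}.
          Hcoef_mpart (\<pi> - replicate_mset d B) \<mu>)
      = (\<Sum>(\<pi>, B)\<in>(SIGMA \<pi>:multiset_partitions S. {B\<in>set_mset \<pi>. d \<le> count \<pi> B}).
          Hcoef_mpart (\<pi> - replicate_mset d B) \<mu>)"
    by (rule sum.Sigma) (auto simp: finite_multiset_partitions)
  also have "\<dots> = (\<Sum>(B, \<pi>')\<in>(SIGMA B:Bs. multiset_partitions (S - repeat_mset d B)). Hcoef_mpart \<pi>' \<mu>)"
    using sum.reindex_bij_betw[OF bij_betw_remove_replicated_block[OF assms],
                               of "\<lambda>(B, \<pi>'). Hcoef_mpart \<pi>' \<mu>"]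
    by (simp add: Bs_def split_def)
  also have "\<dots> = (\<Sum>B\<in>Bs. Hcoef_mpart_sum (S - repeat_mset d B) \<mu>)"
    unfolding Hcoef_mpart_sum_def using fin
    by (subst sum.Sigma) (auto simp: Bs_def finite_multiset_partitions)
  finally have "Hcoef_mpart_sum S (add_mset d \<mu>) = Hcoef_mpart_sum S \<mu> +
      (\<Sum>B\<in>Bs. Hcoef_mpart_sum (S - repeat_mset d B) \<mu>)" .
  moreover have "{B. repeat_mset d B \<subseteq># S} = insert {#} Bs" "{#} \<notin> Bs"
    unfolding Bs_def by auto
  ultimately show ?thesis using fin by simp
qed

section \<open>Specialisation at \<open>\<Xi>\<^sub>\<mu>\<close>\<close>

definition pXi_prod :: "nat multiset \<Rightarrow> nat multiset \<Rightarrow> rat" where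
  "pXi_prod \<mu> \<rho> = (\<Prod>k\<in>#\<rho>. pXi \<mu> k)"

lemma evalXi_eq_sum_pXi_prod: "evalXi f \<mu> = (\<Sum>\<rho>\<in>keys f. lookup f \<rho> * pXi_prod \<mu> \<rho>)"
  unfolding evalXi_def pXi_prod_def ..

lemma evalXi_eq_sum_superset:
  assumes "finite A" "keys f \<subseteq> A"
  shows "evalXi f \<mu> = (\<Sum>\<rho>\<in>A. lookup f \<rho> * pXi_prod \<mu> \<rho>)"
  unfolding evalXi_eq_sum_pXi_prod using assms
  by (intro sum.mono_neutral_left) (auto simp: in_keys_iff)

lemma evalXi_add: "evalXi (f + g) \<mu> = evalXi f \<mu> + evalXi g \<mu>"
  using evalXi_eq_sum_superset[of "keys f \<union> keys g", OF _ keys_add]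
        evalXi_eq_sum_superset[of "keys f \<union> keys g" f] evalXi_eq_sum_superset[of "keys f \<union> keys g" g]
  by (simp add: lookup_add algebra_simps sum.distrib)

lemma evalXi_sum: "evalXi (\<Sum>i\<in>A. f i) \<mu> = (\<Sum>i\<in>A. evalXi (f i) \<mu>)"
proof -
  have "evalXi 0 \<mu> = 0" by (simp add: evalXi_def)
  thus ?thesis by (induction A rule: infinite_finite_induct) (auto simp: evalXi_add)
qed

lemma evalXi_single: "evalXi (single \<rho> a) \<mu> = a * pXi_prod \<mu> \<rho>"
  by (cases "a = 0") (simp_all add: evalXi_eq_sum_pXi_prod)

lemma evalXi_mult: "evalXi (f * g) \<mu> = evalXi f \<mu> * evalXi g \<mu>"
proof -
  have "f * g = (\<Sum>k\<in>keys f. single k (lookup f k)) * (\<Sum>l\<in>keys g. single l (lookup g l))"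
    by (simp flip: poly_mapping_sum_single)
  also have "\<dots> = (\<Sum>k\<in>keys f. \<Sum>l\<in>keys g. single (k + l) (lookup f k * lookup g l))"
    by (simp add: sum_product mult_single)
  finally have "evalXi (f * g) \<mu> = (\<Sum>k\<in>keys f. \<Sum>l\<in>keys g.
                    (lookup f k * pXi_prod \<mu> k) * (lookup g l * pXi_prod \<mu> l))"
    by (simp add: evalXi_sum evalXi_single pXi_prod_def algebra_simps)
  thus ?thesis by (simp add: evalXi_eq_sum_pXi_prod sum_product)
qed

lemma evalXi_one: "evalXi 1 \<mu> = 1"
  using evalXi_single[of "{#}" 1 \<mu>] by (simp add: pXi_prod_def)

lemma evalXi_prod_list: "evalXi (\<Prod>k\<leftarrow>ks. f k) \<mu> = (\<Prod>k\<leftarrow>ks. evalXi (f k) \<mu>)"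
  by (induction ks) (auto simp: evalXi_one evalXi_mult)

lemma evalXi_cong_scaled:
  assumes "\<And>\<rho>. lookup g \<rho> = c * lookup f \<rho>"
  shows "evalXi g \<mu> = c * evalXi f \<mu>"
proof -
  have "keys g \<subseteq> keys f" using assms by (auto simp: in_keys_iff)
  hence "evalXi g \<mu> = (\<Sum>\<rho>\<in>keys f. lookup g \<rho> * pXi_prod \<mu> \<rho>)"
    by (intro evalXi_eq_sum_superset) simp_all
  thus ?thesis by (simp add: evalXi_def pXi_prod_def assms sum_distrib_left algebra_simps)
qed

lemma evalXi_empty: "evalXi f {#} = lookup f {#}"
proof -
  have pXi_prod_empty: "pXi_prod {#} \<rho> = (if \<rho> = {#} then 1 else 0)" for \<rho>
    by (cases \<rho>) (auto simp: pXi_prod_def pXi_def)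
  show ?thesis unfolding evalXi_eq_sum_pXi_prod pXi_prod_empty
    by (simp add: sum.delta in_keys_iff if_distrib cong: if_cong)
qed

lemma lookup_single_singleton_mult:
  "lookup (single {#k#} x * g) \<rho> = (if k \<in># \<rho> then x * lookup g (\<rho> - {#k#}) else 0)"
proof -
  have "single {#k#} x * g = (\<Sum>q\<in>keys g. single ({#k#} + q) (x * lookup g q))"
    by (subst poly_mapping_sum_single[of g]) (simp only: sum_distrib_left mult_single)
  hence "lookup (single {#k#} x * g) \<rho> =
           (\<Sum>q\<in>keys g. if q = \<rho> - {#k#} \<and> k \<in># \<rho> then x * lookup g q else 0)"
    by (auto simp: lookup_sum lookup_single when_def intro!: sum.cong)
  thus ?thesis by (cases "k \<in># \<rho>") (auto simp: sum.delta in_keys_iff)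
qed

lemma sum_mset_eq_sum_count:
  "finite A \<Longrightarrow> set_mset \<rho> \<subseteq> A \<Longrightarrow> sum_mset \<rho> = (\<Sum>k\<in>A. k * count \<rho> k)"
proof (induction \<rho>)
  case (add x \<rho>)
  have "(\<Sum>k\<in>A. k * count (add_mset x \<rho>) k) = (\<Sum>k\<in>A. k * count \<rho> k + (if k = x then x else 0))"
    by (rule sum.cong) auto
  thus ?case using add by (simp add: sum.distrib sum.delta)
qed simp

text \<open>The factor comes from \<open>z\<^sub>\<rho> = k m\<^sub>k(\<rho>) z\<^bsub>\<rho> - {k}\<^esub>\<close>.\<close>

lemma lookup_hsym_diff_part:
  assumes "0 < k" "k \<le> n" "k \<in># \<rho>"
  shows "lookup (hsym (int n - int k)) (\<rho> - {#k#}) =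
           (if is_partition \<rho> \<and> sum_mset \<rho> = n then of_nat (k * count \<rho> k) / of_nat (zee \<rho>) else 0)"
proof -
  obtain \<sigma> where \<rho>: "\<rho> = add_mset k \<sigma>" using assms(3) by (metis multi_member_split)
  have cond: "is_partition \<sigma> \<and> sum_mset \<sigma> = n - k \<longleftrightarrow> is_partition \<rho> \<and> sum_mset \<rho> = n"
    using assms(1,2) \<rho> by (auto simp: is_partition_def)
  have \<sigma>: "\<rho> - {#k#} = \<sigma>" by (simp add: \<rho>)
  have nk: "nat (int n - int k) = n - k" using assms(2) by simp
  show ?thesis
  proof (cases "is_partition \<rho> \<and> sum_mset \<rho> = n")
    case True
    define c where "c = k * count \<rho> k"
    have "zee \<rho> = c * zee \<sigma>" by (simp add: \<rho> c_def zee_add_mset algebra_simps)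
    moreover have "0 < c" using assms by (simp add: c_def)
    moreover have "0 < zee \<sigma>" using True cond zee_pos by blast
    ultimately show ?thesis using True cond \<sigma> nk assms(2) by (simp add: lookup_hsym flip: c_def)
  qed (use cond \<sigma> nk in \<open>auto simp: lookup_hsym\<close>)
qed

lemma newton_identity_hsym:
  assumes "0 < n"
  shows "lookup (\<Sum>k\<in>{1..n}. psym {#k#} * hsym (int n - int k)) \<rho> = of_nat n * lookup (hsym (int n)) \<rho>"
proof -
  have "lookup (\<Sum>k\<in>{1..n}. psym {#k#} * hsym (int n - int k)) \<rho> =
        (\<Sum>k\<in>{1..n}. if k \<in># \<rho> then lookup (hsym (int n - int k)) (\<rho> - {#k#}) else 0)"
    by (simp only: lookup_sum psym_def lookup_single_singleton_mult mult_1)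
  also have "\<dots> = (\<Sum>k\<in>{1..n}. if is_partition \<rho> \<and> sum_mset \<rho> = n
                      then of_nat (k * count \<rho> k) / of_nat (zee \<rho>) else 0)"
    by (rule sum.cong) (auto simp: lookup_hsym_diff_part not_in_iff)
  also have "\<dots> = of_nat n * lookup (hsym (int n)) \<rho>"
  proof (cases "is_partition \<rho> \<and> sum_mset \<rho> = n")
    case True
    hence "set_mset \<rho> \<subseteq> {1..n}"
      using member_le_sum_mset by (force simp: is_partition_def)
    hence "(\<Sum>k\<in>{1..n}. k * count \<rho> k) = n"
      using sum_mset_eq_sum_count[of "{1..n}" \<rho>] True by simp
    hence "(\<Sum>k\<in>{1..n}. of_nat (k * count \<rho> k) :: rat) = of_nat n"
      by (simp only: of_nat_sum[symmetric])
    thus ?thesis using True by (simp add: lookup_hsym sum_divide_distrib[symmetric])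
  qed (auto simp: lookup_hsym)
  finally show ?thesis .
qed

definition hXi :: "nat multiset \<Rightarrow> nat \<Rightarrow> rat" where
  "hXi \<mu> n = evalXi (hsym (int n)) \<mu>"

lemma hXi_0: "hXi \<mu> 0 = 1"
  by (simp add: hXi_def hsym_0 evalXi_one)

lemma hXi_empty: "hXi {#} n = (if n = 0 then 1 else 0)"
  unfolding hXi_def evalXi_empty lookup_hsym by (simp add: is_partition_def zee_def)

lemma hXi_newton: "0 < n \<Longrightarrow> of_nat n * hXi \<mu> n = (\<Sum>k\<in>{1..n}. pXi \<mu> k * hXi \<mu> (n - k))"
  using evalXi_cong_scaled[OF newton_identity_hsym, of n \<mu>]
  by (simp add: hXi_def evalXi_sum evalXi_mult psym_def evalXi_single pXi_prod_def)

section \<open>The generating function of \<open>h\<^sub>n[\<Xi>\<^sub>\<mu>]\<close>\<close>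

unbundle fps_syntax

lemma fps_X_deriv_unique:
  fixes F G P :: "'a::{idom,ring_char_0} fps"
  assumes "fps_X * fps_deriv F = P * F" "fps_X * fps_deriv G = P * G"
    and "P $ 0 = 0" "F $ 0 = G $ 0"
  shows "F = G"
proof -
  define D where "D = F - G"
  have eq: "fps_X * fps_deriv D = P * D" using assms(1,2) by (simp add: D_def algebra_simps)
  have "D $ n = 0" for n
  proof (induction n rule: less_induct)
    case (less n)
    show ?case
    proof (cases n)
      case 0 thus ?thesis using assms(4) by (simp add: D_def)
    next
      case (Suc m)
      have "of_nat n * D $ n = (fps_X * fps_deriv D) $ n" using Suc by simp
      also have "\<dots> = (P * D) $ n" by (simp add: eq)
      also have "\<dots> = (\<Sum>i=0..n. P $ i * D $ (n - i))" by (rule fps_mult_nth)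
      also have "\<dots> = 0"
        using assms(3) less Suc by (intro sum.neutral ballI) (metis diff_less mult_eq_0_iff neq0_conv zero_less_Suc)
      finally show ?thesis using Suc by (simp only: mult_eq_0_iff of_nat_eq_0_iff) simp
    qed
  qed
  thus ?thesis by (simp add: D_def fps_ext)
qed

definition hXi_fps :: "nat multiset \<Rightarrow> rat fps" where
  "hXi_fps \<mu> = Abs_fps (hXi \<mu>)"

definition pXi_fps :: "nat multiset \<Rightarrow> rat fps" where
  "pXi_fps \<mu> = Abs_fps (\<lambda>k. if k = 0 then 0 else pXi \<mu> k)"

definition geometric_fps :: "nat \<Rightarrow> rat fps" where
  "geometric_fps d = Abs_fps (\<lambda>n. if d dvd n then 1 else 0)"

lemma hXi_fps_X_deriv: "fps_X * fps_deriv (hXi_fps \<mu>) = pXi_fps \<mu> * hXi_fps \<mu>"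
proof (rule fps_ext)
  fix n
  show "(fps_X * fps_deriv (hXi_fps \<mu>)) $ n = (pXi_fps \<mu> * hXi_fps \<mu>) $ n"
  proof (cases n)
    case 0 thus ?thesis by (simp add: hXi_fps_def pXi_fps_def fps_mult_nth)
  next
    case (Suc m)
    have "(fps_X * fps_deriv (hXi_fps \<mu>)) $ n = of_nat n * hXi \<mu> n"
      using Suc by (simp add: hXi_fps_def)
    also have "\<dots> = (\<Sum>k\<in>{1..n}. pXi \<mu> k * hXi \<mu> (n - k))"
      by (rule hXi_newton) (simp add: Suc)
    also have "\<dots> = (pXi_fps \<mu> * hXi_fps \<mu>) $ n"
      by (simp add: fps_mult_nth pXi_fps_def hXi_fps_def sum.atLeast_Suc_atMost)
    finally show ?thesis .
  qed
qed

lemma geometric_fps_times: "0 < d \<Longrightarrow> geometric_fps d * (1 - fps_X ^ d) = 1"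
  by (rule fps_ext)
     (auto simp: geometric_fps_def algebra_simps fps_X_power_mult_nth less_eq_dvd_minus[symmetric]
           dest: dvd_imp_le)

lemma pXi_single: "pXi {#d#} k = (if d dvd k then of_nat d else 0)"
  by (simp add: pXi_def)

lemma pXi_fps_single:
  assumes "0 < d"
  shows "pXi_fps {#d#} = fps_const (of_nat d) * (fps_X ^ d * geometric_fps d)"
  using assms
  by (intro fps_ext)
     (auto simp: pXi_fps_def pXi_single geometric_fps_def fps_X_power_mult_nth
                 less_eq_dvd_minus[symmetric] dest: dvd_imp_le)

lemma geometric_fps_X_deriv:
  assumes "0 < d"
  shows "fps_X * fps_deriv (geometric_fps d) = pXi_fps {#d#} * geometric_fps d"
proof -
  let ?G = "geometric_fps d" and ?c = "fps_const (of_nat d) :: rat fps"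
  have inv: "?G * (1 - fps_X ^ d) = 1" by (rule geometric_fps_times[OF assms])
  hence "fps_deriv (?G * (1 - fps_X ^ d)) = 0" by simp
  hence deriv: "fps_deriv ?G * (1 - fps_X ^ d) = ?G * (?c * fps_X ^ (d - 1))"
    by (simp add: fps_deriv_power algebra_simps)
  have X_power: "fps_X * fps_X ^ (d - 1) = (fps_X ^ d :: rat fps)" using assms by (cases d) auto
  have "fps_X * fps_deriv ?G = fps_X * fps_deriv ?G * (?G * (1 - fps_X ^ d))" by (simp add: inv)
  also have "\<dots> = fps_X * (fps_deriv ?G * (1 - fps_X ^ d)) * ?G" by (simp add: algebra_simps)
  also have "\<dots> = ?c * (fps_X ^ d * ?G) * ?G"
    unfolding deriv unfolding X_power[symmetric] by (simp add: algebra_simps)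
  also have "\<dots> = pXi_fps {#d#} * ?G" by (simp add: pXi_fps_single[OF assms] algebra_simps)
  finally show ?thesis .
qed

lemma pXi_union: "pXi (\<mu> + \<nu>) k = pXi \<mu> k + pXi \<nu> k"
proof -
  let ?A = "set_mset \<mu> \<union> set_mset \<nu>"
  have pXi_superset: "pXi \<rho> k = (\<Sum>x\<in>?A. of_nat (if x dvd k then x * count \<rho> x else 0))"
    if "set_mset \<rho> \<subseteq> ?A" for \<rho>
    unfolding pXi_def of_nat_sum using that by (intro sum.mono_neutral_left) auto
  have "pXi (\<mu> + \<nu>) k = (\<Sum>x\<in>?A. of_nat (if x dvd k then x * count \<mu> x else 0) +
                                     of_nat (if x dvd k then x * count \<nu> x else 0))"
    by (subst pXi_superset) (auto simp: algebra_simps intro!: sum.cong)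
  thus ?thesis by (simp only: sum.distrib pXi_superset[OF Un_upper1] pXi_superset[OF Un_upper2])
qed

lemma hXi_fps_add_mset:
  assumes "0 < d"
  shows "hXi_fps (add_mset d \<mu>) = hXi_fps \<mu> * geometric_fps d"
proof (rule fps_X_deriv_unique)
  show "fps_X * fps_deriv (hXi_fps (add_mset d \<mu>)) = pXi_fps (add_mset d \<mu>) * hXi_fps (add_mset d \<mu>)"
    by (rule hXi_fps_X_deriv)
  have "pXi_fps (add_mset d \<mu>) = pXi_fps \<mu> + pXi_fps {#d#}"
    by (rule fps_ext) (simp add: pXi_fps_def pXi_union[of \<mu> "{#d#}", simplified])
  moreover have "fps_X * fps_deriv (hXi_fps \<mu> * geometric_fps d) =
      (fps_X * fps_deriv (hXi_fps \<mu>)) * geometric_fps d + hXi_fps \<mu> * (fps_X * fps_deriv (geometric_fps d))"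
    by (simp add: algebra_simps)
  ultimately show "fps_X * fps_deriv (hXi_fps \<mu> * geometric_fps d) =
        pXi_fps (add_mset d \<mu>) * (hXi_fps \<mu> * geometric_fps d)"
    by (simp only: hXi_fps_X_deriv geometric_fps_X_deriv[OF assms]) (simp add: algebra_simps)
qed (simp_all add: pXi_fps_def hXi_fps_def geometric_fps_def hXi_0)

lemma hXi_add_mset:
  assumes "0 < d"
  shows "hXi (add_mset d \<mu>) c = (\<Sum>j\<in>{j. d * j \<le> c}. hXi \<mu> (c - d * j))"
proof -
  have "hXi (add_mset d \<mu>) c = (\<Sum>i=0..c. if d dvd (c - i) then hXi \<mu> i else 0)"
    using arg_cong[OF hXi_fps_add_mset[OF assms], of "\<lambda>F. F $ c"]
    by (simp add: hXi_fps_def geometric_fps_def fps_mult_nth if_distrib cong: if_cong)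
  also have "\<dots> = (\<Sum>i\<in>{i\<in>{0..c}. d dvd (c - i)}. hXi \<mu> i)"
    by (rule sum.inter_filter[symmetric]) simp
  also have "\<dots> = (\<Sum>j\<in>{j. d * j \<le> c}. hXi \<mu> (c - d * j))"
    using assms
    by (intro sum.reindex_bij_witness[where i = "\<lambda>j. c - d * j" and j = "\<lambda>i. (c - i) div d"]) auto
  finally show ?thesis .
qed

section \<open>The recursion for \<open>h\<^sub>\<lambda>[\<Xi>\<^sub>\<mu>]\<close>\<close>

definition hXi_content :: "nat multiset \<Rightarrow> nat multiset \<Rightarrow> rat" where
  "hXi_content S \<mu> = (\<Prod>x\<in>set_mset S. hXi \<mu> (count S x))"

lemma hXi_content_empty: "hXi_content S {#} = (if S = {#} then 1 else 0)"
proof (cases "S = {#}")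
  case False
  then obtain x where "x \<in># S" by (meson multiset_nonemptyE)
  hence "hXi {#} (count S x) = 0" by (simp add: hXi_empty)
  hence "hXi_content S {#} = 0"
    using \<open>x \<in># S\<close> unfolding hXi_content_def by (intro prod_zero) auto
  thus ?thesis using False by simp
qed (simp add: hXi_content_def)

lemma bij_betw_count_PiE:
  assumes "0 < d"
  shows "bij_betw (\<lambda>B. restrict (count B) (set_mset S)) {B. repeat_mset d B \<subseteq># S}
           (PiE (set_mset S) (\<lambda>x. {j. d * j \<le> count S x}))"
proof (rule bij_betw_byWitness[where f' = "\<lambda>g. \<Sum>x\<in>set_mset S. replicate_mset (g x) x"])
  have count_sum: "count (\<Sum>x\<in>set_mset S. replicate_mset (g x) x) y = (if y \<in># S then g y else 0)"
    for g :: "'a \<Rightarrow> nat" and y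
    by (simp add: count_sum sum.delta if_distrib cong: if_cong)
  have support: "count B y = 0" if "repeat_mset d B \<subseteq># S" "y \<notin># S" for B y
  proof -
    have "d * count B y \<le> count S y" using that(1) by (simp add: subseteq_mset_def)
    thus ?thesis using that(2) assms by (simp add: not_in_iff)
  qed
  show "\<forall>B\<in>{B. repeat_mset d B \<subseteq># S}.
          (\<Sum>x\<in>set_mset S. replicate_mset (restrict (count B) (set_mset S) x) x) = B"
  proof
    fix B assume "B \<in> {B. repeat_mset d B \<subseteq># S}"
    thus "(\<Sum>x\<in>set_mset S. replicate_mset (restrict (count B) (set_mset S) x) x) = B"
      using support by (intro multiset_eqI) (simp add: count_sum)
  qed
  show "\<forall>g\<in>PiE (set_mset S) (\<lambda>x. {j. d * j \<le> count S x}).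
          restrict (count (\<Sum>x\<in>set_mset S. replicate_mset (g x) x)) (set_mset S) = g"
    by (auto simp: count_sum fun_eq_iff PiE_def extensional_def)
  show "(\<lambda>B. restrict (count B) (set_mset S)) ` {B. repeat_mset d B \<subseteq># S}
          \<subseteq> PiE (set_mset S) (\<lambda>x. {j. d * j \<le> count S x})"
    by (auto simp: subseteq_mset_def)
  show "(\<lambda>g. \<Sum>x\<in>set_mset S. replicate_mset (g x) x) ` PiE (set_mset S) (\<lambda>x. {j. d * j \<le> count S x})
          \<subseteq> {B. repeat_mset d B \<subseteq># S}"
    by (auto simp: subseteq_mset_def count_sum PiE_def Pi_def)
qed

lemma hXi_content_add_mset:
  assumes "0 < d"
  shows "hXi_content S (add_mset d \<mu>) =
           (\<Sum>B\<in>{B. repeat_mset d B \<subseteq># S}. hXi_content (S - repeat_mset d B) \<mu>)"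
proof -
  let ?J = "\<lambda>x. {j. d * j \<le> count S x}"
  have "j \<le> d * j" for j using assms by simp
  hence "?J x \<subseteq> {..count S x}" for x using le_trans by blast
  hence "finite (?J x)" for x by (rule finite_subset) simp
  hence "hXi_content S (add_mset d \<mu>) =
           (\<Sum>g\<in>PiE (set_mset S) ?J. \<Prod>x\<in>set_mset S. hXi \<mu> (count S x - d * g x))"
    unfolding hXi_content_def hXi_add_mset[OF assms] by (intro prod_sum_PiE) auto
  also have "\<dots> = (\<Sum>B\<in>{B. repeat_mset d B \<subseteq># S}. \<Prod>x\<in>set_mset S. hXi \<mu> (count S x - d * count B x))"
    using sum.reindex_bij_betw[OF bij_betw_count_PiE[OF assms, of S],
                               of "\<lambda>g. \<Prod>x\<in>set_mset S. hXi \<mu> (count S x - d * g x)"]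
    by (simp cong: prod.cong)
  also have "\<dots> = (\<Sum>B\<in>{B. repeat_mset d B \<subseteq># S}. hXi_content (S - repeat_mset d B) \<mu>)"
  proof (rule sum.cong)
    fix B
    have "set_mset (S - repeat_mset d B) \<subseteq> set_mset S" by (meson diff_subset_eq_self set_mset_mono)
    hence "hXi_content (S - repeat_mset d B) \<mu> = (\<Prod>x\<in>set_mset S. hXi \<mu> (count S x - d * count B x))"
      unfolding hXi_content_def count_diff count_repeat_mset
      by (intro prod.mono_neutral_left) (auto simp: hXi_0 in_diff_count)
    thus "(\<Prod>x\<in>set_mset S. hXi \<mu> (count S x - d * count B x)) = hXi_content (S - repeat_mset d B) \<mu>"
      by simp
  qed simp
  finally show ?thesis .
qed

lemma hXi_content_eq_Hcoef_mpart_sum: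
  "is_partition \<mu> \<Longrightarrow> hXi_content S \<mu> = Hcoef_mpart_sum S \<mu>"
proof (induction \<mu> arbitrary: S)
  case empty
  show ?case by (simp add: hXi_content_empty Hcoef_mpart_sum_empty)
next
  case (add d \<mu>)
  hence "0 < d" "is_partition \<mu>" by (auto simp: is_partition_def)
  thus ?case using add.IH by (simp add: hXi_content_add_mset Hcoef_mpart_sum_add_mset)
qed

lemma count_content_mset:
  "count (content_mset lam) x = (if 0 < x \<and> x \<le> length lam then lam ! (x - 1) else 0)"
proof -
  have "count (content_mset lam) x = (\<Sum>i<length lam. if i = x - 1 \<and> 0 < x then lam ! i else 0)"
    unfolding content_mset_def count_sum by (rule sum.cong) auto
  thus ?thesis by (cases "0 < x") (auto simp: sum.delta)
qed

lemma prod_list_hXi: "(\<Prod>k\<leftarrow>lam. hXi \<mu> k) = hXi_content (content_mset lam) \<mu>"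
proof -
  let ?C = "content_mset lam"
  have "(\<Prod>k\<leftarrow>lam. hXi \<mu> k) = (\<Prod>i\<in>{0..<length lam}. hXi \<mu> (lam ! i))"
    by (simp add: prod.list_conv_set_nth)
  also have "\<dots> = (\<Prod>x\<in>{1..length lam}. hXi \<mu> (count ?C x))"
    by (rule prod.reindex_bij_witness[where i = "\<lambda>x. x - 1" and j = Suc])
       (auto simp: count_content_mset)
  also have "\<dots> = hXi_content ?C \<mu>"
  proof -
    have "set_mset ?C \<subseteq> {1..length lam}"
    proof
      fix x assume "x \<in># ?C"
      hence "count ?C x \<noteq> 0" by simp
      thus "x \<in> {1..length lam}" unfolding count_content_mset by (auto split: if_splits)
    qed
    thus ?thesis unfolding hXi_content_def
      by (intro prod.mono_neutral_right) (auto simp: hXi_0 not_in_iff)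
  qed
  finally show ?thesis .
qed

theorem theorem2:
  fixes lam :: "nat list" and \<mu> :: "nat multiset"
  assumes "sorted_wrt (\<ge>) lam" and "\<forall>x\<in>set lam. 0 < x"
    and "is_partition \<mu>"
  shows "evalXi (\<Prod>k\<leftarrow>lam. hsym (int k)) \<mu>
       = (\<Sum>\<pi>\<in>multiset_partitions (content_mset lam). Hcoef (mtilde \<pi>) \<mu>)"
proof -
  have "evalXi (\<Prod>k\<leftarrow>lam. hsym (int k)) \<mu> = (\<Prod>k\<leftarrow>lam. hXi \<mu> k)"
    by (simp add: evalXi_prod_list hXi_def)
  also have "\<dots> = hXi_content (content_mset lam) \<mu>" by (rule prod_list_hXi)
  also have "\<dots> = Hcoef_mpart_sum (content_mset lam) \<mu>"
    by (rule hXi_content_eq_Hcoef_mpart_sum[OF assms(3)])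
  also have "\<dots> = (\<Sum>\<pi>\<in>multiset_partitions (content_mset lam). Hcoef (mtilde \<pi>) \<mu>)"
    by (simp add: Hcoef_mpart_sum_def Hcoef_mtilde)
  finally show ?thesis .
qed

end
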